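(* Let $Q=(q_0,\ldots,q_n)$ be a weights vector and let $\mathbf{v}_0,\ldots,\mathbf{v}_n\in\mathbb{Q}^n$ be vectors generating $\mathbb{Q}^n$ (as a $\mathbb{Q}$-vector space) such that $\sum_{j=0}^n q_j\mathbf{v}_j=0$. Let $L$ be the lattice generated by $\mathbf{v}_0,\ldots,\mathbf{v}_n$ and $L'$ the sublattice generated by $q_0\mathbf{v}_0,\ldots,q_n\mathbf{v}_n$. Then: (a) $[L:L']=\prod_{j=0}^n q_j$; (b) if $\mathbf{e}_1,\ldots,\mathbf{e}_n$ is a basis of $L$, $V=(v_{ij})$ is the $n\times(n+1)$ matrix with $\mathbf{v}_j=\sum_{i=1}^n v_{ij}\mathbf{e}_i$, and $V_j$ denotes the determinant of the matrix obtained from $V$ by deleting its $j$-th column ($0\leq j\leq n$), then there is a fixed $\epsilon\in\{0,1\}$ with $V_j=(-1)^{\epsilon+j}q_j$ for all $j$; (c) for every $j$, $\mathbf{v}_j=d_j\mathbf{n}_j$, where $\mathbf{n}_j$ is the generator of the semigroup $\mathbb{R}_{\geq0}\mathbf{v}_j\cap L$ and $d_j=\gcd(q_0,\ldots,q_{j-1},q_{j+1},\ldots,q_n)$; in particular $L$ is generated by $\mathbf{n}_0,\ldots,\mathbf{n}_n$; moreover $\mathbf{n}_0,\ldots,\mathbf{n}_n$ generate $\mathbb{Q}^n$ and $\sum_{j=0}^n q'_j\mathbf{n}_j=0$, where $Q'=(q'_0,\ldots,q'_n)$ is the reduction of $Q$.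
   Context: A weights vector is an $(n+1)$-tuple $Q=(q_0,\ldots,q_n)$ of positive integers with $\gcd(q_0,\ldots,q_n)=1$. Set $d_j=\gcd(q_0,\ldots,q_{j-1},q_{j+1},\ldots,q_n)$ and $a_j=\mathrm{lcm}(d_0,\ldots,d_{j-1},d_{j+1},\ldots,d_n)$. Then $a_j\mid q_j$, and the reduction of $Q$ is $Q'=(q'_0,\ldots,q'_n)$ with $q'_j=q_j/a_j$. *)

theory Defs
  imports "Jordan_Normal_Form.Determinant"
begin

definition lincomb :: "nat \<Rightarrow> (nat \<Rightarrow> rat) \<Rightarrow> (nat \<Rightarrow> rat vec) \<Rightarrow> nat \<Rightarrow> rat vec" where
  "lincomb d c v m = vec d (\<lambda>i. \<Sum>j<m. c j * (v j $ i))"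

definition int_span :: "nat \<Rightarrow> (nat \<Rightarrow> rat vec) \<Rightarrow> nat \<Rightarrow> rat vec set" where
  "int_span d v m = {lincomb d (\<lambda>j. of_int (c j)) v m | c. True}"

definition generates_Qn :: "nat \<Rightarrow> (nat \<Rightarrow> rat vec) \<Rightarrow> nat \<Rightarrow> bool" where
  "generates_Qn d v m = (\<forall>x \<in> carrier_vec d. \<exists>c. x = lincomb d c v m)"

definition lattice_index :: "rat vec set \<Rightarrow> rat vec set \<Rightarrow> nat" where
  "lattice_index L L' = card {{y \<in> L. y - x \<in> L'} | x. x \<in> L}"

definition is_lattice_basis :: "nat \<Rightarrow> rat vec set \<Rightarrow> (nat \<Rightarrow> rat vec) \<Rightarrow> bool" where
  "is_lattice_basis d L e \<longleftrightarrow>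
     (\<forall>i<d. e i \<in> carrier_vec d) \<and> int_span d e d = L \<and>
     (\<forall>c :: nat \<Rightarrow> int. lincomb d (\<lambda>i. of_int (c i)) e d = 0\<^sub>v d \<longrightarrow> (\<forall>i<d. c i = 0))"

text \<open>w generates the semigroup  R_{>=0} v \<inter> L  (vectors are rational, so the ray
  R_{>=0} v meets Q^d exactly in the rational nonnegative multiples of v).\<close>
definition ray_generator :: "rat vec set \<Rightarrow> rat vec \<Rightarrow> rat vec \<Rightarrow> bool" where
  "ray_generator L v w \<longleftrightarrow>
     {x. (\<exists>t::rat. t \<ge> 0 \<and> x = t \<cdot>\<^sub>v v) \<and> x \<in> L} = {of_nat k \<cdot>\<^sub>v w | k. True}"

definition weights_vector :: "nat \<Rightarrow> (nat \<Rightarrow> nat) \<Rightarrow> bool" where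
  "weights_vector n q \<longleftrightarrow> (\<forall>j\<le>n. q j > 0) \<and> Gcd (q ` {0..n}) = 1"

definition dgcd :: "nat \<Rightarrow> (nat \<Rightarrow> nat) \<Rightarrow> nat \<Rightarrow> nat" where
  "dgcd n q j = Gcd (q ` ({0..n} - {j}))"

definition acoef :: "nat \<Rightarrow> (nat \<Rightarrow> nat) \<Rightarrow> nat \<Rightarrow> nat" where
  "acoef n q j = Lcm (dgcd n q ` ({0..n} - {j}))"

definition reduction :: "nat \<Rightarrow> (nat \<Rightarrow> nat) \<Rightarrow> nat \<Rightarrow> nat" where
  "reduction n q j = q j div acoef n q j"

definition del_col :: "nat \<Rightarrow> (nat \<Rightarrow> nat \<Rightarrow> int) \<Rightarrow> nat \<Rightarrow> int mat" where
  "del_col n V j = mat n n (\<lambda>(i, k). V i (if k < j then k else Suc k))"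

end

theory Submission
  imports Defs
begin

(*
  Everything rests on one fact: the relations among v_0, ..., v_n are exactly the multiples
  of q. Over Q this holds because the bordered matrix [V; e_0] (the coordinates of the v_j with
  the row picking the 0-th coefficient appended) is invertible: multiplied by a right inverse
  of V bordered with the column q it becomes lower triangular with determinant q_0. Over Z it
  then follows from gcd(q) = 1.

  (a) Two lattice points sum c_j v_j and sum c'_j v_j are congruent modulo L' iff c_j = c'_j
      (mod q_j) for all j, so L/L' is in bijection with the product of the Z/q_j.
  (b) By Laplace expansion the signed maximal minors (-1)^j V_j form an integral relation,
      hence equal t q. The same triangular factorization, now with an integral right inverse
      of V (each e_i lies in L), shows that det [V; e_0] = +-t q_0 divides q_0, so t = +-1.
  (c) A multiple t v_j lies in L iff t d_j is an integer, because the relation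
      sum c_k v_k - t v_j = 0 is s q with s q_k integral for all k /= j. By Bezout, d_j being
      coprime to q_j and dividing all other weights, v_j / d_j itself lies in L.
*)

section \<open>Linear combinations\<close>

lemma dim_lincomb [simp]: "dim_vec (lincomb d c u m) = d"
  by (simp add: lincomb_def)

lemma lincomb_carrier [simp]: "lincomb d c u m \<in> carrier_vec d"
  by (simp add: lincomb_def)

lemma index_lincomb [simp]: "i < d \<Longrightarrow> lincomb d c u m $ i = (\<Sum>j<m. c j * u j $ i)"
  by (simp add: lincomb_def)

lemma lincomb_cong:
  "(\<And>j. j < m \<Longrightarrow> c j = c' j) \<Longrightarrow> (\<And>j. j < m \<Longrightarrow> u j = u' j) \<Longrightarrow>
    lincomb d c u m = lincomb d c' u' m"
  unfolding lincomb_def by (intro eq_vecI) auto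

lemma lincomb_diff: "lincomb d c u m - lincomb d c' u m = lincomb d (\<lambda>j. c j - c' j) u m"
  by (intro eq_vecI) (auto simp: sum_subtractf algebra_simps)

lemma smult_lincomb: "a \<cdot>\<^sub>v lincomb d c u m = lincomb d (\<lambda>j. a * c j) u m"
  by (intro eq_vecI) (auto simp: sum_distrib_left algebra_simps)

lemma lincomb_eq_0: "(\<And>j. j < m \<Longrightarrow> c j = 0) \<Longrightarrow> lincomb d c u m = 0\<^sub>v d"
  by (intro eq_vecI) auto

lemma lincomb_delta:
  assumes "j < m" "u j \<in> carrier_vec d"
  shows "lincomb d (\<lambda>k. if k = j then 1 else 0) u m = u j"
proof (rule eq_vecI)
  fix i
  assume "i < dim_vec (u j)"
  then have "i < d"
    using assms(2) by simp
  have "(\<Sum>k<m. (if k = j then 1 else 0) * u k $ i) = (\<Sum>k<m. if k = j then u j $ i else 0)"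
    by (rule sum.cong) auto
  with \<open>i < d\<close> show "lincomb d (\<lambda>k. if k = j then 1 else 0) u m $ i = u j $ i"
    using assms(1) by simp
qed (use assms in simp)

lemma lincomb_smult_vectors:
  assumes "\<And>j. j < m \<Longrightarrow> u j \<in> carrier_vec d"
  shows "lincomb d c (\<lambda>j. a j \<cdot>\<^sub>v u j) m = lincomb d (\<lambda>j. c j * a j) u m"
proof -
  have "(a j \<cdot>\<^sub>v u j) $ i = a j * u j $ i" if "j < m" "i < d" for i j
    using assms[OF that(1)] that(2) by (metis carrier_vecD index_smult_vec(1))
  then show ?thesis
    by (intro eq_vecI) (simp_all add: mult.assoc)
qed

lemma lincomb_lincomb:
  "lincomb d c (\<lambda>j. lincomb d (b j) u m') m = lincomb d (\<lambda>k. \<Sum>j<m. c j * b j k) u m'"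
  unfolding lincomb_def
  by (intro eq_vecI) (auto simp: sum_distrib_left sum_distrib_right sum.swap[of _ "{..<m}"] mult.assoc)

lemma int_span_cong: "(\<And>j. j < m \<Longrightarrow> u j = u' j) \<Longrightarrow> int_span d u m = int_span d u' m"
  unfolding int_span_def using lincomb_cong[of m _ _ u u' d] by auto

lemma int_span_dim_0: "int_span 0 u m = {0\<^sub>v 0}"
proof -
  have "lincomb 0 c u m = 0\<^sub>v 0" for c
    by (rule eq_vecI) simp_all
  then show ?thesis
    unfolding int_span_def by simp
qed

lemma nat_multiples_eq_imp_eq:
  fixes w w' :: "'a :: field_char_0 vec"
  assumes multiples: "{of_nat k \<cdot>\<^sub>v w | k. True} = {of_nat k \<cdot>\<^sub>v w' | k. True}"
    and nonzero: "w \<noteq> 0\<^sub>v (dim_vec w)"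
  shows "w = w'"
proof -
  have "w' \<in> {of_nat k \<cdot>\<^sub>v w | k. True}"
    unfolding multiples by (auto intro: exI[of _ 1])
  moreover have "w \<in> {of_nat k \<cdot>\<^sub>v w' | k. True}"
    unfolding multiples[symmetric] by (auto intro: exI[of _ 1])
  ultimately obtain m1 m2 where m1: "w' = of_nat m1 \<cdot>\<^sub>v w" and m2: "w = of_nat m2 \<cdot>\<^sub>v w'"
    by blast
  obtain i where i: "i < dim_vec w" "w $ i \<noteq> 0"
    using nonzero by (metis eq_vecI index_zero_vec)
  have "w $ i = of_nat (m2 * m1) * w $ i"
    using i(1) by (subst m2, subst m1) simp
  with i(2) have "m2 * m1 = 1"
    by (simp del: of_nat_mult)
  then show ?thesis
    using m1 by simp
qed

section \<open>Bordered matrices and maximal minors\<close>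

definition bordered_mat :: "nat \<Rightarrow> (nat \<Rightarrow> nat \<Rightarrow> 'a) \<Rightarrow> (nat \<Rightarrow> 'a) \<Rightarrow> 'a mat" where
  "bordered_mat n A y = mat (Suc n) (Suc n) (\<lambda>(i, j). if i < n then A i j else y j)"

lemma bordered_mat_carrier [simp]:
  "dim_row (bordered_mat n A y) = Suc n" "dim_col (bordered_mat n A y) = Suc n"
  "bordered_mat n A y \<in> carrier_mat (Suc n) (Suc n)"
  by (simp_all add: bordered_mat_def)

lemma det_bordered_mat_dvd:
  fixes A B :: "nat \<Rightarrow> nat \<Rightarrow> 'a :: comm_ring_1" and q :: "nat \<Rightarrow> 'a"
  assumes right_inverse: "\<And>i k. i < n \<Longrightarrow> k < n \<Longrightarrow> (\<Sum>j<Suc n. A i j * B j k) = (if k = i then 1 else 0)"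
    and kernel: "\<And>i. i < n \<Longrightarrow> (\<Sum>j<Suc n. A i j * q j) = 0"
  shows "det (bordered_mat n A (\<lambda>j. if j = 0 then 1 else 0)) dvd q 0"
proof -
  define P where "P = bordered_mat n A (\<lambda>j. if j = 0 then 1 else 0)"
  define N where "N = mat (Suc n) (Suc n) (\<lambda>(j, k). if k < n then B j k else q j)"
  have P: "P \<in> carrier_mat (Suc n) (Suc n)" and N: "N \<in> carrier_mat (Suc n) (Suc n)"
    by (simp_all add: P_def N_def)
  \<comment> \<open>\<open>P * N\<close> is lower triangular with diagonal \<open>1, \<dots>, 1, q 0\<close>.\<close>
  have PN: "(P * N) $$ (i, k) = (if i < n then (if k = i then 1 else 0) else N $$ (0, k))"
    if "i < Suc n" "k < Suc n" for i k
  proof -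
    have "(P * N) $$ (i, k) = (\<Sum>j<Suc n. P $$ (i, j) * N $$ (j, k))"
      using that P N by (simp add: scalar_prod_def lessThan_atLeast0)
    also have "\<dots> = (if i < n then (if k = i then 1 else 0) else N $$ (0, k))"
    proof (cases "i < n")
      case True
      then show ?thesis
        using that right_inverse[of i k] kernel[of i]
        by (cases "k < n") (auto simp: P_def N_def bordered_mat_def less_Suc_eq intro!: sum.cong)
    next
      case False
      have "(\<Sum>j<Suc n. P $$ (i, j) * N $$ (j, k)) = (\<Sum>j<Suc n. if j = 0 then N $$ (0, k) else 0)"
        using that False by (intro sum.cong) (auto simp: P_def bordered_mat_def)
      then show ?thesis
        using False by simp
    qed
    finally show ?thesis .
  qed
  have "det (P * N) = (\<Prod>i<Suc n. (P * N) $$ (i, i))"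
    using P N PN by (subst det_lower_triangular[of "Suc n"]) (auto simp: prod_list_diag_prod atLeast0LessThan)
  also have "\<dots> = q 0"
    using PN by (simp add: N_def)
  finally have "det P * det N = q 0"
    using det_mult[OF P N] by simp
  then show ?thesis
    unfolding P_def by (metis dvdI)
qed

definition signed_minor :: "nat \<Rightarrow> (nat \<Rightarrow> nat \<Rightarrow> int) \<Rightarrow> nat \<Rightarrow> int" where
  "signed_minor n V j = (-1) ^ j * det (del_col n V j)"

lemma det_bordered_mat:
  "det (bordered_mat n V y) = (-1) ^ n * (\<Sum>j<Suc n. y j * signed_minor n V j)"
proof -
  have del: "mat_delete (bordered_mat n V y) n j = del_col n V j" if "j < Suc n" for j
    using that by (intro eq_matI) (auto simp: bordered_mat_def mat_delete_def del_col_def)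
  have last_row: "bordered_mat n V y $$ (n, j) = y j" if "j < Suc n" for j
    using that by (simp add: bordered_mat_def)
  have "det (bordered_mat n V y) = (\<Sum>j<Suc n. bordered_mat n V y $$ (n, j) * cofactor (bordered_mat n V y) n j)"
    by (rule laplace_expansion_row) simp_all
  also have "\<dots> = (\<Sum>j<Suc n. (-1) ^ n * (y j * signed_minor n V j))"
    by (rule sum.cong) (simp_all add: cofactor_def del last_row signed_minor_def power_add)
  finally show ?thesis
    by (simp add: sum_distrib_left del: sum.lessThan_Suc)
qed

lemma signed_minors_in_kernel:
  assumes "i < n"
  shows "(\<Sum>j<Suc n. V i j * signed_minor n V j) = 0"
proof -
  have "det (bordered_mat n V (V i)) = 0"
    using assms by (intro det_identical_rows[of _ "Suc n" i n]) (auto simp: bordered_mat_def)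
  then show ?thesis
    by (simp add: det_bordered_mat)
qed

section \<open>Arithmetic of the weights\<close>

lemma Ints_mult_Gcd:
  fixes s :: rat and f :: "'a \<Rightarrow> nat"
  assumes "\<And>k. k \<in> J \<Longrightarrow> s * of_nat (f k) \<in> \<int>"
  shows "s * of_nat (Gcd (f ` J)) \<in> \<int>"
proof -
  obtain a b where s: "quotient_of s = (a, b)"
    by (cases "quotient_of s")
  have b: "b > 0" "coprime b a" "s = of_int a / of_int b"
    using quotient_of_denom_pos[OF s] quotient_of_coprime[OF s] quotient_of_div[OF s]
    by (simp_all add: coprime_commute)
  have "nat b dvd f k" if k: "k \<in> J" for k
  proof -
    obtain m where "s * of_nat (f k) = of_int m"
      using assms[OF k] by (auto elim: Ints_cases)
    then have "a * int (f k) = m * b"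
      using b by (simp add: field_simps) (metis of_int_eq_iff of_int_mult of_int_of_nat_eq)
    then have "b dvd int (f k)"
      using b(2) coprime_dvd_mult_right_iff by (metis dvd_triv_right)
    then show ?thesis
      using b(1) by (metis int_dvd_int_iff nat_0_le order_less_imp_le)
  qed
  then have "nat b dvd Gcd (f ` J)"
    by (auto intro: Gcd_greatest)
  then obtain g where "Gcd (f ` J) = nat b * g" ..
  then have "s * of_nat (Gcd (f ` J)) = of_int (a * int g)"
    using b by simp
  then show ?thesis
    by simp
qed

lemma weights_vector_common_divisor:
  assumes "weights_vector n q" and "\<And>i. i \<le> n \<Longrightarrow> m dvd q i"
  shows "m = 1"
proof -
  have "m dvd Gcd (q ` {0..n})"
    using assms(2) by (auto intro: Gcd_greatest)
  then show ?thesis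
    using assms(1) by (simp add: weights_vector_def)
qed

lemma dgcd_dvd: "k \<le> n \<Longrightarrow> k \<noteq> j \<Longrightarrow> dgcd n q j dvd q k"
  unfolding dgcd_def by (rule Gcd_dvd) auto

lemma dgcd_pos:
  assumes "weights_vector n q" and "0 < n" and "j \<le> n"
  shows "0 < dgcd n q j"
proof -
  define k where "k = (if j = 0 then 1 else 0 :: nat)"
  have "k \<le> n" "k \<noteq> j"
    using assms(2) by (auto simp: k_def)
  moreover have "0 < q k"
    using \<open>k \<le> n\<close> assms(1) by (simp add: weights_vector_def)
  ultimately show ?thesis
    using dgcd_dvd[of k n j q] by (cases "dgcd n q j = 0") auto
qed

lemma coprime_dgcd_weight:
  assumes "weights_vector n q" and "j \<le> n"
  shows "coprime (dgcd n q j) (q j)"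
proof -
  have "gcd (dgcd n q j) (q j) dvd q i" if "i \<le> n" for i
  proof (cases "i = j")
    case False
    with \<open>i \<le> n\<close> have "dgcd n q j dvd q i"
      by (rule dgcd_dvd)
    then show ?thesis
      by (rule dvd_trans[OF gcd_dvd1])
  qed simp
  then show ?thesis
    unfolding coprime_iff_gcd_eq_1 by (rule weights_vector_common_divisor[OF assms(1)])
qed

lemma acoef_dvd_weight: "j \<le> n \<Longrightarrow> acoef n q j dvd q j"
  unfolding acoef_def by (rule Lcm_least) (auto intro: dgcd_dvd)

lemma dgcd_mult_acoef:
  assumes "weights_vector n q" and "j \<le> n"
  shows "dgcd n q j * acoef n q j = Lcm (dgcd n q ` {0..n})"
proof -
  have "coprime (dgcd n q j) (acoef n q j)"
    using dvd_refl acoef_dvd_weight[OF assms(2)] coprime_dgcd_weight[OF assms] by (rule coprime_divisors)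
  then have "dgcd n q j * acoef n q j = lcm (dgcd n q j) (acoef n q j)"
    by (simp add: lcm_coprime)
  also have "\<dots> = Lcm (insert (dgcd n q j) (dgcd n q ` ({0..n} - {j})))"
    by (simp add: acoef_def)
  also have "insert (dgcd n q j) (dgcd n q ` ({0..n} - {j})) = dgcd n q ` {0..n}"
    using assms(2) by auto
  finally show ?thesis .
qed

lemma reduction_over_dgcd:
  assumes "weights_vector n q" and "j \<le> n"
  shows "(of_nat (reduction n q j) / of_nat (dgcd n q j) :: 'a :: field_char_0)
    = of_nat (q j) / of_nat (Lcm (dgcd n q ` {0..n}))"
proof -
  obtain r where r: "q j = acoef n q j * r"
    using acoef_dvd_weight[OF assms(2)] by blast
  moreover have "acoef n q j \<noteq> 0"
    using r assms by (auto simp: weights_vector_def)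
  ultimately show ?thesis
    unfolding reduction_def dgcd_mult_acoef[OF assms, symmetric] by (simp add: field_simps)
qed

section \<open>The lattice of a weighted spanning family\<close>

locale weighted_spanning_family =
  fixes n :: nat and q :: "nat \<Rightarrow> nat" and v :: "nat \<Rightarrow> rat vec"
  assumes weights: "weights_vector n q"
    and carrier: "\<forall>j\<le>n. v j \<in> carrier_vec n"
    and spanning: "generates_Qn n v (Suc n)"
    and relation: "lincomb n (\<lambda>j. of_nat (q j)) v (Suc n) = 0\<^sub>v n"
begin

abbreviation L :: "rat vec set" where
  "L \<equiv> int_span n v (Suc n)"

abbreviation L' :: "rat vec set" where
  "L' \<equiv> int_span n (\<lambda>j. of_nat (q j) \<cdot>\<^sub>v v j) (Suc n)"

lemma weight_pos: "j \<le> n \<Longrightarrow> 0 < q j"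
  using weights by (simp add: weights_vector_def)

lemma det_bordered_vectors_nonzero:
  "det (bordered_mat n (\<lambda>i j. v j $ i) (\<lambda>j. if j = 0 then 1 else 0)) \<noteq> 0"
proof -
  have "\<forall>k<n. \<exists>b. lincomb n b v (Suc n) = unit_vec n k"
    using spanning unfolding generates_Qn_def by (metis unit_vec_carrier)
  then obtain b where b: "\<And>k. k < n \<Longrightarrow> lincomb n (b k) v (Suc n) = unit_vec n k"
    by metis
  have "det (bordered_mat n (\<lambda>i j. v j $ i) (\<lambda>j. if j = 0 then 1 else 0)) dvd of_nat (q 0)"
  proof (rule det_bordered_mat_dvd[where B = "\<lambda>j k. b k j"])
    fix i k
    assume "i < n" "k < n"
    then show "(\<Sum>j<Suc n. v j $ i * b k j) = (if k = i then 1 else 0)"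
      using arg_cong[OF b[of k], of "\<lambda>x. x $ i"] by (simp add: mult.commute)
  next
    fix i
    assume "i < n"
    then show "(\<Sum>j<Suc n. v j $ i * of_nat (q j)) = 0"
      using arg_cong[OF relation, of "\<lambda>x. x $ i"] by (simp add: mult.commute)
  qed
  then show ?thesis
    using weight_pos[of 0] by auto
qed

lemma relation_eq_0_if_first_coeff_0:
  assumes c: "lincomb n c v (Suc n) = 0\<^sub>v n" and c0: "c 0 = 0" and j: "j \<le> n"
  shows "c j = 0"
proof -
  define P where "P = bordered_mat n (\<lambda>i j. v j $ i) (\<lambda>j. if j = 0 then 1 else 0)"
  have "(P *\<^sub>v vec (Suc n) c) $ i = 0" if i: "i < Suc n" for i
  proof -
    have "(P *\<^sub>v vec (Suc n) c) $ i = (\<Sum>j<Suc n. P $$ (i, j) * c j)"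
      using i by (simp add: P_def scalar_prod_def lessThan_atLeast0)
    also have "\<dots> = (if i < n then lincomb n c v (Suc n) $ i else c 0)"
    proof (cases "i < n")
      case True
      then show ?thesis
        by (simp add: P_def bordered_mat_def mult.commute)
    next
      case False
      then have "(\<Sum>j<Suc n. P $$ (i, j) * c j) = (\<Sum>j<Suc n. if j = 0 then c 0 else 0)"
        using i by (intro sum.cong) (auto simp: P_def bordered_mat_def)
      then show ?thesis
        using False by simp
    qed
    finally show ?thesis
      using c c0 by simp
  qed
  then have "P *\<^sub>v vec (Suc n) c = 0\<^sub>v (Suc n)"
    by (intro eq_vecI) (simp_all add: P_def)
  moreover have "vec (Suc n) c \<in> carrier_vec (Suc n)" and "P \<in> carrier_mat (Suc n) (Suc n)"
    by (simp_all add: P_def)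
  ultimately have "vec (Suc n) c = 0\<^sub>v (Suc n)"
    using det_bordered_vectors_nonzero det_0_iff_vec_prod_zero_field unfolding P_def by blast
  then have "vec (Suc n) c $ j = 0\<^sub>v (Suc n) $ j"
    by simp
  then show ?thesis
    using j by simp
qed

lemma rat_relation_multiple_of_weights:
  assumes c: "lincomb n c v (Suc n) = 0\<^sub>v n"
  shows "\<exists>s. \<forall>j\<le>n. c j = s * of_nat (q j)"
proof -
  define s where "s = c 0 / of_nat (q 0)"
  have "lincomb n (\<lambda>j. c j - s * of_nat (q j)) v (Suc n)
      = lincomb n c v (Suc n) - s \<cdot>\<^sub>v lincomb n (\<lambda>j. of_nat (q j)) v (Suc n)"
    by (simp add: lincomb_diff smult_lincomb)
  also have "\<dots> = 0\<^sub>v n"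
    unfolding c relation by (intro eq_vecI) simp_all
  finally have "c j - s * of_nat (q j) = 0" if "j \<le> n" for j
    using relation_eq_0_if_first_coeff_0[of "\<lambda>j. c j - s * of_nat (q j)", OF _ _ that] weight_pos[of 0]
    by (simp add: s_def)
  then show ?thesis
    by auto
qed

lemma int_relation_multiple_of_weights:
  assumes "lincomb n (\<lambda>j. of_int (c j)) v (Suc n) = 0\<^sub>v n"
  shows "\<exists>t. \<forall>j\<le>n. c j = t * int (q j)"
proof -
  obtain s :: rat where s: "\<And>j. j \<le> n \<Longrightarrow> of_int (c j) = s * of_nat (q j)"
    using rat_relation_multiple_of_weights[OF assms] by blast
  have "s * of_nat (Gcd (q ` {0..n})) \<in> \<int>"
  proof (rule Ints_mult_Gcd)
    fix k
    assume "k \<in> {0..n}"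
    then show "s * of_nat (q k) \<in> \<int>"
      by (simp flip: s)
  qed
  then have "s \<in> \<int>"
    using weights by (simp add: weights_vector_def)
  then obtain t where t: "s = of_int t"
    by (rule Ints_cases)
  have "c j = t * int (q j)" if "j \<le> n" for j
  proof -
    have "(of_int (c j) :: rat) = of_int (t * int (q j))"
      using s[OF that] by (simp add: t)
    then show ?thesis
      by (rule of_int_eq_iff[THEN iffD1])
  qed
  then show ?thesis
    by blast
qed

abbreviation lattice_point :: "(nat \<Rightarrow> int) \<Rightarrow> rat vec" where
  "lattice_point c \<equiv> lincomb n (\<lambda>j. of_int (c j)) v (Suc n)"

lemma lattice_eq_range: "L = range lattice_point"
  unfolding int_span_def by (simp add: full_SetCompr_eq)

lemma sublattice_eq_range: "L' = range (\<lambda>d. lattice_point (\<lambda>j. d j * int (q j)))"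
proof -
  have "lincomb n (\<lambda>j. of_int (d j)) (\<lambda>j. of_nat (q j) \<cdot>\<^sub>v v j) (Suc n)
      = lattice_point (\<lambda>j. d j * int (q j))" for d
    using carrier by (subst lincomb_smult_vectors) (auto intro!: lincomb_cong)
  then show ?thesis
    unfolding int_span_def by (simp add: full_SetCompr_eq)
qed

lemma lattice_point_diff_in_sublattice_iff:
  "lattice_point c - lattice_point c' \<in> L' \<longleftrightarrow> (\<forall>j\<le>n. c j mod int (q j) = c' j mod int (q j))"
proof
  assume "lattice_point c - lattice_point c' \<in> L'"
  then obtain d where d: "lattice_point c - lattice_point c' = lattice_point (\<lambda>j. d j * int (q j))"
    unfolding sublattice_eq_range by blast
  have "lattice_point (\<lambda>j. c j - c' j - d j * int (q j))
      = (lattice_point c - lattice_point c') - lattice_point (\<lambda>j. d j * int (q j))"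
    by (simp add: lincomb_diff)
  also have "\<dots> = 0\<^sub>v n"
    unfolding d by simp
  finally have "\<exists>t. \<forall>j\<le>n. c j - c' j - d j * int (q j) = t * int (q j)"
    by (rule int_relation_multiple_of_weights)
  then obtain t where t: "\<And>j. j \<le> n \<Longrightarrow> c j - c' j - d j * int (q j) = t * int (q j)"
    by blast
  have "int (q j) dvd c j - c' j" if "j \<le> n" for j
  proof -
    have "c j - c' j = t * int (q j) + d j * int (q j)"
      using t[OF that] by linarith
    then show ?thesis
      by simp
  qed
  then show "\<forall>j\<le>n. c j mod int (q j) = c' j mod int (q j)"
    by (simp add: mod_eq_dvd_iff)
next
  assume "\<forall>j\<le>n. c j mod int (q j) = c' j mod int (q j)"
  then have "\<forall>j\<le>n. int (q j) dvd c j - c' j"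
    by (simp add: mod_eq_dvd_iff)
  define d where "d j = (c j - c' j) div int (q j)" for j
  have d: "c j - c' j = d j * int (q j)" if "j \<le> n" for j
    using \<open>\<forall>j\<le>n. int (q j) dvd c j - c' j\<close> that by (simp add: d_def)
  have "lattice_point c - lattice_point c' = lattice_point (\<lambda>j. d j * int (q j))"
    unfolding lincomb_diff by (rule lincomb_cong) (simp_all flip: d of_int_diff)
  then show "lattice_point c - lattice_point c' \<in> L'"
    unfolding sublattice_eq_range by blast
qed

lemma coset_eq_iff:
  "{y \<in> L. y - lattice_point c \<in> L'} = {y \<in> L. y - lattice_point c' \<in> L'}
    \<longleftrightarrow> (\<forall>j\<le>n. c j mod int (q j) = c' j mod int (q j))"
proof
  assume "{y \<in> L. y - lattice_point c \<in> L'} = {y \<in> L. y - lattice_point c' \<in> L'}"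
  moreover have "lattice_point c \<in> {y \<in> L. y - lattice_point c \<in> L'}"
    by (simp add: lattice_eq_range lattice_point_diff_in_sublattice_iff)
  ultimately show "\<forall>j\<le>n. c j mod int (q j) = c' j mod int (q j)"
    by (simp add: lattice_point_diff_in_sublattice_iff)
qed (auto simp: lattice_eq_range lattice_point_diff_in_sublattice_iff)

lemma lattice_index_eq_prod_weights: "lattice_index L L' = (\<Prod>j\<le>n. q j)"
proof -
  define coset where "coset c = {y \<in> L. y - lattice_point c \<in> L'}" for c
  define R where "R = PiE {..n} (\<lambda>j. {0..<int (q j)})"
  have coset_eq: "coset c = coset c' \<longleftrightarrow> (\<forall>j\<le>n. c j mod int (q j) = c' j mod int (q j))" for c c'
    unfolding coset_def by (rule coset_eq_iff)
  have "{{y \<in> L. y - x \<in> L'} | x. x \<in> L} = range coset"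
    by (auto simp: lattice_eq_range coset_def)
  also have "\<dots> = coset ` R"
  proof (intro equalityI subsetI)
    fix C
    assume "C \<in> range coset"
    then obtain c where C: "C = coset c"
      by blast
    define r where "r = restrict (\<lambda>j. c j mod int (q j)) {..n}"
    have "r \<in> R"
      using weight_pos by (auto simp: r_def R_def)
    moreover have "coset r = C"
      unfolding C coset_eq by (simp add: r_def)
    ultimately show "C \<in> coset ` R"
      by blast
  qed blast
  finally have cosets: "{{y \<in> L. y - x \<in> L'} | x. x \<in> L} = coset ` R" .
  have "inj_on coset R"
  proof (rule inj_onI)
    fix r r'
    assume "r \<in> R" "r' \<in> R" "coset r = coset r'"
    then show "r = r'"
      unfolding coset_eq R_def by (intro PiE_ext) (auto dest!: PiE_mem)
  qed
  then have "lattice_index L L' = card R"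
    unfolding lattice_index_def cosets by (rule card_image)
  also have "\<dots> = (\<Prod>j\<le>n. q j)"
    by (simp add: R_def card_PiE)
  finally show ?thesis .
qed

context
  fixes e :: "nat \<Rightarrow> rat vec" and V :: "nat \<Rightarrow> nat \<Rightarrow> int"
  assumes basis: "is_lattice_basis n L e"
    and coordinates: "\<forall>j\<le>n. v j = lincomb n (\<lambda>i. of_int (V i j)) e n"
begin

lemma lattice_point_in_basis:
  "lattice_point c = lincomb n (\<lambda>i. of_int (\<Sum>j<Suc n. V i j * c j)) e n"
proof -
  have "lattice_point c = lincomb n (\<lambda>j. of_int (c j)) (\<lambda>j. lincomb n (\<lambda>i. of_int (V i j)) e n) (Suc n)"
    using coordinates by (intro lincomb_cong) auto
  also have "\<dots> = lincomb n (\<lambda>i. of_int (\<Sum>j<Suc n. V i j * c j)) e n"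
    unfolding lincomb_lincomb by (intro lincomb_cong) (simp_all add: mult.commute)
  finally show ?thesis .
qed

lemma basis_independent: "lincomb n (\<lambda>i. of_int (c i)) e n = 0\<^sub>v n \<Longrightarrow> i < n \<Longrightarrow> c i = 0"
  using basis unfolding is_lattice_basis_def by blast

lemma lattice_point_eq_0_iff: "lattice_point c = 0\<^sub>v n \<longleftrightarrow> (\<forall>i<n. (\<Sum>j<Suc n. V i j * c j) = 0)"
  unfolding lattice_point_in_basis
proof
  assume "lincomb n (\<lambda>i. of_int (\<Sum>j<Suc n. V i j * c j)) e n = 0\<^sub>v n"
  from basis_independent[OF this] show "\<forall>i<n. (\<Sum>j<Suc n. V i j * c j) = 0"
    by blast
next
  assume zero: "\<forall>i<n. (\<Sum>j<Suc n. V i j * c j) = 0"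
  show "lincomb n (\<lambda>i. of_int (\<Sum>j<Suc n. V i j * c j)) e n = 0\<^sub>v n"
  proof (rule lincomb_eq_0)
    fix i
    assume "i < n"
    with zero have "(\<Sum>j<Suc n. V i j * c j) = 0"
      by blast
    then show "(of_int (\<Sum>j<Suc n. V i j * c j) :: rat) = 0"
      by (metis of_int_0)
  qed
qed

lemma coordinate_matrix_right_inverse:
  assumes "k < n"
  shows "\<exists>c. \<forall>i<n. (\<Sum>j<Suc n. V i j * c j) = (if k = i then 1 else 0)"
proof -
  have e: "e k \<in> carrier_vec n" "int_span n e n = L"
    using basis assms unfolding is_lattice_basis_def by auto
  have e_k: "e k = lincomb n (\<lambda>i. of_int (if k = i then 1 else 0)) e n"
    using lincomb_delta[of k n e n, OF assms e(1)] by (simp add: if_distrib eq_commute cong: if_cong)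
  then have "e k \<in> int_span n e n"
    unfolding int_span_def by (intro CollectI exI[of _ "\<lambda>i. if k = i then 1 else 0"]) simp
  then obtain c where c: "e k = lattice_point c"
    unfolding e(2) lattice_eq_range by blast
  have "lincomb n (\<lambda>i. of_int ((\<Sum>j<Suc n. V i j * c j) - (if k = i then 1 else 0))) e n
      = lattice_point c - e k"
    unfolding lattice_point_in_basis e_k by (simp add: lincomb_diff)
  also have "\<dots> = 0\<^sub>v n"
    unfolding c by simp
  finally have zero: "lincomb n (\<lambda>i. of_int ((\<Sum>j<Suc n. V i j * c j) - (if k = i then 1 else 0))) e n = 0\<^sub>v n" .
  have "(\<Sum>j<Suc n. V i j * c j) = (if k = i then 1 else 0)" if "i < n" for i
    using basis_independent[OF zero that] by (simp only: right_minus_eq)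
  then show ?thesis
    by blast
qed

lemma signed_minors_eq_unit_mult_weights:
  "\<exists>t. \<bar>t\<bar> = 1 \<and> (\<forall>j\<le>n. signed_minor n V j = t * int (q j))"
proof -
  have "lattice_point (signed_minor n V) = 0\<^sub>v n"
    unfolding lattice_point_eq_0_iff using signed_minors_in_kernel by blast
  then obtain t where t: "\<And>j. j \<le> n \<Longrightarrow> signed_minor n V j = t * int (q j)"
    using int_relation_multiple_of_weights by blast
  have "\<forall>k\<in>{..<n}. \<exists>c. \<forall>i<n. (\<Sum>j<Suc n. V i j * c j) = (if k = i then 1 else 0)"
    using coordinate_matrix_right_inverse by blast
  then obtain C where C: "\<And>i k. i < n \<Longrightarrow> k < n \<Longrightarrow> (\<Sum>j<Suc n. V i j * C k j) = (if k = i then 1 else 0)"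
    by (auto dest!: bchoice)
  have "lattice_point (\<lambda>j. int (q j)) = 0\<^sub>v n"
    using relation by simp
  then have "\<And>i. i < n \<Longrightarrow> (\<Sum>j<Suc n. V i j * int (q j)) = 0"
    unfolding lattice_point_eq_0_iff by blast
  with C have "det (bordered_mat n V (\<lambda>j. if j = 0 then 1 else 0)) dvd int (q 0)"
    by (rule det_bordered_mat_dvd)
  moreover have "(\<Sum>j<Suc n. (if j = 0 then 1 else 0) * signed_minor n V j) = signed_minor n V 0"
    by (simp add: sum.lessThan_Suc_shift del: sum.lessThan_Suc)
  then have "det (bordered_mat n V (\<lambda>j. if j = 0 then 1 else 0)) = (-1) ^ n * t * int (q 0)"
    using t[of 0] by (simp add: det_bordered_mat)
  ultimately have "t * int (q 0) dvd 1 * int (q 0)"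
    by (simp add: mult.assoc)
  moreover have "int (q 0) \<noteq> 0"
    using weight_pos[of 0] by simp
  ultimately have "t dvd 1"
    by simp
  then have "\<bar>t\<bar> = 1"
    by simp
  with t show ?thesis
    by blast
qed

lemma det_del_col_eq_weights:
  "\<exists>\<epsilon>\<in>{0, 1::nat}. \<forall>j\<le>n. det (del_col n V j) = (-1) ^ (\<epsilon> + j) * int (q j)"
proof -
  obtain t where "\<bar>t\<bar> = 1" and t: "\<forall>j\<le>n. signed_minor n V j = t * int (q j)"
    using signed_minors_eq_unit_mult_weights by blast
  then have "t = (-1) ^ 0 \<or> t = (-1) ^ 1"
    by (simp add: abs_if split: if_splits)
  then obtain \<epsilon> :: nat where "\<epsilon> \<in> {0, 1}" "t = (-1) ^ \<epsilon>"
    by blast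
  moreover have "det (del_col n V j) = (-1) ^ j * signed_minor n V j" for j
    by (simp add: signed_minor_def)
  ultimately show ?thesis
    using t by (auto simp: power_add)
qed

end

definition primitive_vec :: "nat \<Rightarrow> rat vec" where
  "primitive_vec j = (1 / of_nat (dgcd n q j)) \<cdot>\<^sub>v v j"

lemma lincomb_delta_v: "j \<le> n \<Longrightarrow> lincomb n (\<lambda>k. if k = j then 1 else 0) v (Suc n) = v j"
  using carrier by (intro lincomb_delta) auto

lemma smult_v_in_lattice_Ints:
  assumes j: "j \<le> n" and t: "t \<cdot>\<^sub>v v j \<in> L"
  shows "t * of_nat (dgcd n q j) \<in> \<int>"
proof -
  obtain c where c: "t \<cdot>\<^sub>v v j = lattice_point c"
    using t unfolding lattice_eq_range by blast
  have "lincomb n (\<lambda>k. of_int (c k) - t * (if k = j then 1 else 0)) v (Suc n)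
      = lattice_point c - t \<cdot>\<^sub>v v j"
    unfolding lincomb_delta_v[OF j, symmetric] by (simp add: smult_lincomb lincomb_diff)
  also have "\<dots> = 0\<^sub>v n"
    unfolding c by simp
  finally have "\<exists>s. \<forall>k\<le>n. of_int (c k) - t * (if k = j then 1 else 0) = s * of_nat (q k)"
    by (rule rat_relation_multiple_of_weights)
  then obtain s where s: "\<And>k. k \<le> n \<Longrightarrow> of_int (c k) - t * (if k = j then 1 else 0) = s * of_nat (q k)"
    by blast
  have "s * of_nat (dgcd n q j) \<in> \<int>"
    unfolding dgcd_def
  proof (rule Ints_mult_Gcd)
    fix k
    assume "k \<in> {0..n} - {j}"
    then show "s * of_nat (q k) \<in> \<int>"
      by (simp flip: s)
  qed
  moreover have "t * of_nat (dgcd n q j) = of_int (c j) * of_nat (dgcd n q j) - (s * of_nat (dgcd n q j)) * of_nat (q j)"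
    using s[OF j] by (simp add: algebra_simps)
  ultimately show ?thesis
    by simp
qed

(* For n = 0 every dgcd is Gcd {} = 0 and Q^0 = {0}; ray_generator_dim_0_iff covers that case. *)
context
  assumes n_pos: "0 < n"
begin

lemma v_eq_smult_primitive_vec:
  assumes "j \<le> n"
  shows "v j = of_nat (dgcd n q j) \<cdot>\<^sub>v primitive_vec j"
  using dgcd_pos[OF weights n_pos assms] by (simp add: primitive_vec_def smult_smult_assoc)

lemma primitive_vec_in_lattice:
  assumes j: "j \<le> n"
  shows "primitive_vec j \<in> L"
proof -
  define D where "D = dgcd n q j"
  have "coprime (int D) (int (q j))"
    using coprime_dgcd_weight[OF weights j] by (simp add: D_def)
  then obtain a b where ab: "a * int D + b * int (q j) = 1"
    by (metis bezout_int coprime_iff_gcd_eq_1)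
  \<comment> \<open>\<open>v j / D = a v j - b \<Sum>k\<noteq>j. (q k / D) v k\<close>, using \<open>q j v j = - \<Sum>k\<noteq>j. q k v k\<close>.\<close>
  define c where "c k = (if k = j then a else - b * (int (q k) div int D))" for k
  have "of_nat D \<cdot>\<^sub>v lattice_point c
      = lincomb n (\<lambda>k. (if k = j then 1 else 0) - of_int b * of_nat (q k)) v (Suc n)"
    unfolding smult_lincomb
  proof (rule lincomb_cong)
    fix k
    assume "k < Suc n"
    show "of_nat D * of_int (c k) = (if k = j then 1 else 0) - of_int b * (of_nat (q k) :: rat)"
    proof (cases "k = j")
      case True
      have "(of_int (a * int D + b * int (q j)) :: rat) = 1"
        using ab by simp
      then show ?thesis
        using True by (simp add: c_def algebra_simps)
    next
      case False
      with \<open>k < Suc n\<close> have "D dvd q k"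
        unfolding D_def by (intro dgcd_dvd) simp_all
      then show ?thesis
        using False dgcd_pos[OF weights n_pos j] by (auto simp: c_def D_def)
    qed
  qed simp
  also have "\<dots> = lincomb n (\<lambda>k. if k = j then 1 else 0) v (Suc n) - of_int b \<cdot>\<^sub>v lincomb n (\<lambda>k. of_nat (q k)) v (Suc n)"
    by (simp add: smult_lincomb lincomb_diff)
  also have "\<dots> = v j"
    using carrier j by (auto simp: lincomb_delta_v relation intro!: eq_vecI)
  finally have "primitive_vec j = (1 / of_nat D) \<cdot>\<^sub>v (of_nat D \<cdot>\<^sub>v lattice_point c)"
    by (simp add: primitive_vec_def D_def)
  also have "\<dots> = lattice_point c"
    using dgcd_pos[OF weights n_pos j] by (simp add: D_def smult_smult_assoc)
  finally show ?thesis
    unfolding lattice_eq_range by blast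
qed

lemma ray_generator_primitive_vec:
  assumes j: "j \<le> n"
  shows "ray_generator L (v j) (primitive_vec j)"
  unfolding ray_generator_def
proof (intro equalityI subsetI)
  define D where "D = dgcd n q j"
  fix x
  assume "x \<in> {x. (\<exists>t\<ge>0. x = t \<cdot>\<^sub>v v j) \<and> x \<in> L}"
  then obtain t where t: "t \<ge> 0" "x = t \<cdot>\<^sub>v v j" and "t \<cdot>\<^sub>v v j \<in> L"
    by blast
  then obtain z where z: "t * of_nat D = of_int z"
    unfolding D_def using smult_v_in_lattice_Ints[OF j] by (blast elim: Ints_cases)
  with t(1) have "0 \<le> z"
    by (metis of_int_0_le_iff of_nat_0_le_iff mult_nonneg_nonneg)
  then obtain m where "z = int m"
    by (rule nonneg_int_cases)
  with z have "t * of_nat D = of_nat m"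
    by simp
  then have "t = of_nat m / of_nat D"
    using dgcd_pos[OF weights n_pos j] by (simp add: D_def eq_divide_eq)
  then have "x = of_nat m \<cdot>\<^sub>v primitive_vec j"
    unfolding primitive_vec_def D_def t(2) by (simp add: smult_smult_assoc)
  then show "x \<in> {of_nat k \<cdot>\<^sub>v primitive_vec j | k. True}"
    by blast
next
  fix x
  assume "x \<in> {of_nat k \<cdot>\<^sub>v primitive_vec j | k. True}"
  then obtain m where x: "x = of_nat m \<cdot>\<^sub>v primitive_vec j"
    by blast
  obtain c where "primitive_vec j = lattice_point c"
    using primitive_vec_in_lattice[OF j] unfolding lattice_eq_range by blast
  then have "x = lattice_point (\<lambda>k. int m * c k)"
    unfolding x by (simp add: smult_lincomb)
  then have "x \<in> L"
    unfolding lattice_eq_range by (rule ssubst) (rule rangeI)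
  moreover have "x = (of_nat m / of_nat (dgcd n q j)) \<cdot>\<^sub>v v j" and "(0::rat) \<le> of_nat m / of_nat (dgcd n q j)"
    unfolding x primitive_vec_def by (simp_all add: smult_smult_assoc)
  ultimately show "x \<in> {x. (\<exists>t\<ge>0. x = t \<cdot>\<^sub>v v j) \<and> x \<in> L}"
    by blast
qed

lemma v_nonzero:
  assumes j: "j \<le> n"
  shows "v j \<noteq> 0\<^sub>v n"
proof
  assume "v j = 0\<^sub>v n"
  then have "lincomb n (\<lambda>k. if k = j then 1 else 0) v (Suc n) = 0\<^sub>v n"
    using lincomb_delta_v[OF j] by simp
  then have "\<exists>s :: rat. \<forall>k\<le>n. (if k = j then 1 else 0) = s * of_nat (q k)"
    by (rule rat_relation_multiple_of_weights)
  then obtain s :: rat where s: "\<And>k. k \<le> n \<Longrightarrow> (if k = j then 1 else 0) = s * of_nat (q k)"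
    by blast
  define k where "k = (if j = 0 then 1 else 0 :: nat)"
  have k: "k \<le> n" "k \<noteq> j"
    using n_pos by (auto simp: k_def)
  then have "s = 0"
    using s[of k] weight_pos[of k] by simp
  with s[OF j] show False
    by simp
qed

lemma ray_generator_unique:
  assumes j: "j \<le> n" and w: "ray_generator L (v j) w"
  shows "w = primitive_vec j"
proof (rule nat_multiples_eq_imp_eq[symmetric])
  show "{of_nat k \<cdot>\<^sub>v primitive_vec j | k. True} = {of_nat k \<cdot>\<^sub>v w | k. True}"
    using w ray_generator_primitive_vec[OF j] unfolding ray_generator_def by simp
  have "dim_vec (primitive_vec j) = n"
    using carrier j by (simp add: primitive_vec_def)
  then show "primitive_vec j \<noteq> 0\<^sub>v (dim_vec (primitive_vec j))"
    using v_nonzero[OF j] v_eq_smult_primitive_vec[OF j] by auto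
qed

lemma lincomb_primitive_vec:
  "lincomb n c primitive_vec (Suc n) = lincomb n (\<lambda>j. c j / of_nat (dgcd n q j)) v (Suc n)"
proof -
  have "primitive_vec = (\<lambda>j. (1 / of_nat (dgcd n q j)) \<cdot>\<^sub>v v j)"
    by (simp add: primitive_vec_def fun_eq_iff)
  then show ?thesis
    using carrier by (simp add: lincomb_smult_vectors)
qed

lemma int_span_primitive_vec: "int_span n primitive_vec (Suc n) = L"
proof (intro equalityI subsetI)
  have "\<forall>j\<in>{..n}. \<exists>b. primitive_vec j = lattice_point b"
    using primitive_vec_in_lattice unfolding lattice_eq_range by blast
  then obtain b where b: "\<And>j. j \<le> n \<Longrightarrow> primitive_vec j = lattice_point (b j)"
    by (auto dest!: bchoice)
  fix x
  assume "x \<in> int_span n primitive_vec (Suc n)"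
  then obtain c where "x = lincomb n (\<lambda>j. of_int (c j)) primitive_vec (Suc n)"
    unfolding int_span_def by blast
  also have "\<dots> = lincomb n (\<lambda>j. of_int (c j)) (\<lambda>j. lattice_point (b j)) (Suc n)"
    using b by (intro lincomb_cong) auto
  also have "\<dots> = lattice_point (\<lambda>k. \<Sum>j<Suc n. c j * b j k)"
    unfolding lincomb_lincomb by (intro lincomb_cong) simp_all
  finally show "x \<in> L"
    unfolding lattice_eq_range by (rule ssubst) (rule rangeI)
next
  fix x
  assume "x \<in> L"
  then obtain c where "x = lattice_point c"
    unfolding lattice_eq_range by blast
  also have "\<dots> = lincomb n (\<lambda>j. of_int (c j * int (dgcd n q j))) primitive_vec (Suc n)"
    unfolding lincomb_primitive_vec using dgcd_pos[OF weights n_pos] by (intro lincomb_cong) simp_all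
  finally show "x \<in> int_span n primitive_vec (Suc n)"
    unfolding int_span_def by (intro CollectI exI[of _ "\<lambda>j. c j * int (dgcd n q j)"]) simp
qed

lemma primitive_vec_generates: "generates_Qn n primitive_vec (Suc n)"
  unfolding generates_Qn_def
proof
  fix x :: "rat vec"
  assume "x \<in> carrier_vec n"
  then obtain c where "x = lincomb n c v (Suc n)"
    using spanning unfolding generates_Qn_def by blast
  also have "\<dots> = lincomb n (\<lambda>j. c j * of_nat (dgcd n q j)) primitive_vec (Suc n)"
    unfolding lincomb_primitive_vec using dgcd_pos[OF weights n_pos] by (intro lincomb_cong) simp_all
  finally show "\<exists>c. x = lincomb n c primitive_vec (Suc n)"
    by blast
qed

lemma reduced_relation_primitive_vec:
  "lincomb n (\<lambda>j. of_nat (reduction n q j)) primitive_vec (Suc n) = 0\<^sub>v n"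
proof -
  define P where "P = Lcm (dgcd n q ` {0..n})"
  have "lincomb n (\<lambda>j. of_nat (reduction n q j)) primitive_vec (Suc n)
      = lincomb n (\<lambda>j. (1 / of_nat P) * of_nat (q j)) v (Suc n)"
    unfolding lincomb_primitive_vec
    by (intro lincomb_cong) (simp_all add: reduction_over_dgcd[OF weights] P_def)
  also have "\<dots> = 0\<^sub>v n"
    unfolding smult_lincomb[symmetric] relation by (intro eq_vecI) simp_all
  finally show ?thesis .
qed

end

lemma ray_generator_dim_0_iff:
  assumes "n = 0" and "j \<le> n"
  shows "ray_generator L (v j) w \<longleftrightarrow> w = 0\<^sub>v 0"
proof -
  have "L = {0\<^sub>v 0}" and "v j = 0\<^sub>v 0"
    using assms carrier by (auto simp: int_span_dim_0)
  moreover have "{of_nat k \<cdot>\<^sub>v w | k. True} = {0\<^sub>v 0} \<longleftrightarrow> w = 0\<^sub>v 0"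
  proof
    assume "{of_nat k \<cdot>\<^sub>v w | k. True} = {0\<^sub>v 0}"
    moreover have "w \<in> {of_nat k \<cdot>\<^sub>v w | k. True}"
      by (auto intro: exI[of _ 1])
    ultimately show "w = 0\<^sub>v 0"
      by blast
  qed (auto intro!: exI[of _ 0] eq_vecI)
  moreover have "{x. (\<exists>t::rat. t \<ge> 0 \<and> x = t \<cdot>\<^sub>v 0\<^sub>v 0) \<and> x \<in> {0\<^sub>v 0}} = {0\<^sub>v 0}"
    by (auto intro!: eq_vecI exI[of _ 0])
  ultimately show ?thesis
    unfolding ray_generator_def by auto
qed

lemma ray_generator_exists: "j \<le> n \<Longrightarrow> \<exists>w. ray_generator L (v j) w"
  using ray_generator_dim_0_iff ray_generator_primitive_vec by blast

lemma ray_generators_properties: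
  assumes nv: "\<forall>j\<le>n. ray_generator L (v j) (nv j)"
  shows "(\<forall>j\<le>n. v j = of_nat (dgcd n q j) \<cdot>\<^sub>v nv j)
    \<and> int_span n nv (Suc n) = L
    \<and> generates_Qn n nv (Suc n)
    \<and> lincomb n (\<lambda>j. of_nat (reduction n q j)) nv (Suc n) = 0\<^sub>v n"
proof (cases "n = 0")
  case True
  then have "nv 0 = 0\<^sub>v 0" and "v 0 = 0\<^sub>v 0"
    using nv ray_generator_dim_0_iff carrier by auto
  then show ?thesis
    using True by (auto simp: int_span_dim_0 generates_Qn_def intro!: eq_vecI)
next
  case False
  then have nv_eq: "nv j = primitive_vec j" if "j < Suc n" for j
    using nv ray_generator_unique that by auto
  have "lincomb n c nv (Suc n) = lincomb n c primitive_vec (Suc n)" for c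
    using nv_eq by (rule lincomb_cong[OF refl])
  moreover have "int_span n nv (Suc n) = int_span n primitive_vec (Suc n)"
    using nv_eq by (rule int_span_cong)
  ultimately show ?thesis
    using False v_eq_smult_primitive_vec nv_eq int_span_primitive_vec primitive_vec_generates
      reduced_relation_primitive_vec
    by (simp add: generates_Qn_def)
qed

end

theorem mainTheorem3:
  fixes n :: nat and q :: "nat \<Rightarrow> nat" and v :: "nat \<Rightarrow> rat vec"
  assumes Q: "weights_vector n q"
    and dim: "\<forall>j\<le>n. v j \<in> carrier_vec n"
    and gen: "generates_Qn n v (Suc n)"
    and rel: "lincomb n (\<lambda>j. of_nat (q j)) v (Suc n) = 0\<^sub>v n"
  shows
    "lattice_index (int_span n v (Suc n)) (int_span n (\<lambda>j. of_nat (q j) \<cdot>\<^sub>v v j) (Suc n))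
        = (\<Prod>j\<le>n. q j)
     \<and> (\<forall>e V. is_lattice_basis n (int_span n v (Suc n)) e \<and>
          (\<forall>j\<le>n. v j = lincomb n (\<lambda>i. of_int (V i j)) e n) \<longrightarrow>
          (\<exists>\<epsilon>\<in>{0,1::nat}. \<forall>j\<le>n. det (del_col n V j) = (-1) ^ (\<epsilon> + j) * int (q j)))
     \<and> (\<forall>j\<le>n. \<exists>w. ray_generator (int_span n v (Suc n)) (v j) w)
     \<and> (\<forall>nv. (\<forall>j\<le>n. ray_generator (int_span n v (Suc n)) (v j) (nv j)) \<longrightarrow>
          (\<forall>j\<le>n. v j = of_nat (dgcd n q j) \<cdot>\<^sub>v nv j)
          \<and> int_span n nv (Suc n) = int_span n v (Suc n)
          \<and> generates_Qn n nv (Suc n)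
          \<and> lincomb n (\<lambda>j. of_nat (reduction n q j)) nv (Suc n) = 0\<^sub>v n)"
proof -
  interpret weighted_spanning_family n q v
    using Q dim gen rel by unfold_locales
  show ?thesis
    using lattice_index_eq_prod_weights det_del_col_eq_weights ray_generator_exists
      ray_generators_properties
    by blast
qed

end
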